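(* Let $n,d \in \mathbb{Z}^+$. Let $A$ be a C-recursive integer sequence of order $d$ with initial conditions $A(0)=A(1)=\cdots=A(d-1)=1$, satisfying $$A(n) = c_{d-1} A(n-1) + c_{d-2} A(n-2) + \cdots + c_{0} A(n-d),$$ where $c_0,\dots,c_{d-1}\in\mathbb{Z}$. Let $g(x) := c_{d-1}x^{d-1}+\cdots+c_1x+c_0 \in \mathbb{Z}[x]$, let $R=\mathbb{Z}[x]/I$ with $I=\langle x^d-g(x)\rangle$, and let $f(x)$ be the image of $x^n$ in $R$. Then $A(n)=f(1)$.
   Context: The image of $x^n$ in $R$ is identified with its unique representative in $\mathbb{Z}[x]$ of degree less than $d$ (the remainder of $x^n$ upon division by the monic polynomial $x^d-g(x)$); $f(1)$ denotes the evaluation of this representative at $x=1$. *)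

theory Defs
  imports "HOL-Computational_Algebra.Polynomial"
begin

definition gpoly :: "(nat \<Rightarrow> int) \<Rightarrow> nat \<Rightarrow> int poly" where
  "gpoly c d = (\<Sum>i<d. monom (c i) i)"

text \<open>The unique representative of degree < d of the image of x^n in Z[x]/(x^d - g(x)).\<close>
definition red_rep :: "(nat \<Rightarrow> int) \<Rightarrow> nat \<Rightarrow> nat \<Rightarrow> int poly" where
  "red_rep c d n = (THE r. degree r < d \<and> (monom 1 d - gpoly c d) dvd (monom 1 n - r))"

end

theory Submission
  imports Defs
begin

text \<open>Since \<open>x^d - g(x)\<close> is monic of degree \<open>d\<close>, the representative \<open>red_rep c d n\<close> exists
  and is unique. Multiplying \<open>x^d = g(x)\<close> by \<open>x^(n - d)\<close> shows that the representatives of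
  the powers of \<open>x\<close> obey the recurrence of \<open>A\<close>; evaluation at \<open>1\<close> is linear, so their values
  at \<open>1\<close> obey it too, and they agree with \<open>A\<close> on the initial powers \<open>x^k\<close>, \<open>k < d\<close>.\<close>

lemma eq_if_dvd_diff_degree_less:
  fixes p r s :: "'a::idom poly"
  assumes "p dvd r - s" and "degree r < degree p" and "degree s < degree p"
  shows "r = s"
proof (rule ccontr)
  assume "r \<noteq> s"
  then have "degree p \<le> degree (r - s)"
    using assms(1) by (intro dvd_imp_degree_le) auto
  moreover have "degree (r - s) < degree p"
    using assms(2,3) degree_diff_le_max[of r s] by linarith
  ultimately show False
    by simp
qed

lemma ex_remainder_monic:
  fixes f p :: "'a::{comm_ring_1,semiring_1_no_zero_divisors} poly"
  assumes "lead_coeff p = 1" and "degree p > 0"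
  obtains r where "degree r < degree p" and "p dvd f - r"
proof -
  obtain q r where qr: "pseudo_divmod f p = (q, r)"
    by fastforce
  have "p \<noteq> 0"
    using assms(1) by auto
  from pseudo_divmod[OF this qr] assms have "f = p * q + r" and "degree r < degree p"
    by auto
  then show thesis
    by (intro that) auto
qed

lemma degree_gpoly_less: "0 < d \<Longrightarrow> degree (gpoly c d) < d"
  unfolding gpoly_def
  by (rule degree_sum_less) (auto intro: le_less_trans[OF degree_monom_le])

lemma degree_monom_minus_gpoly: "0 < d \<Longrightarrow> degree (monom 1 d - gpoly c d) = d"
  using degree_add_eq_left[of "- gpoly c d" "monom 1 d"] degree_gpoly_less[of d c]
  by (simp add: degree_monom_eq)

lemma lead_coeff_monom_minus_gpoly: "0 < d \<Longrightarrow> lead_coeff (monom 1 d - gpoly c d) = 1"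
  using degree_gpoly_less[of d c]
  by (simp add: degree_monom_minus_gpoly coeff_eq_0)

lemma monom_minus_shifted_gpoly:
  assumes "d \<le> n"
  shows "monom 1 n - (\<Sum>i<d. smult (c i) (monom 1 (n - d + i)))
    = monom 1 (n - d) * (monom 1 d - gpoly c d)"
proof -
  have "monom 1 (n - d) * gpoly c d = (\<Sum>i<d. smult (c i) (monom 1 (n - d + i)))"
    unfolding gpoly_def by (simp add: sum_distrib_left mult_monom smult_monom)
  moreover have "monom 1 (n - d) * monom 1 d = (monom 1 n :: int poly)"
    using assms by (simp add: mult_monom)
  ultimately show ?thesis
    by (simp add: right_diff_distrib)
qed

lemma red_rep_eqI:
  assumes "0 < d" and "degree r < d" and "(monom 1 d - gpoly c d) dvd (monom 1 n - r)"
  shows "red_rep c d n = r"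
  unfolding red_rep_def
proof (rule the_equality)
  fix s
  assume s: "degree s < d \<and> (monom 1 d - gpoly c d) dvd (monom 1 n - s)"
  have "(monom 1 d - gpoly c d) dvd (monom 1 n - r) - (monom 1 n - s)"
    using assms(3) s by (blast intro: dvd_diff)
  then show "s = r"
    using assms s degree_monom_minus_gpoly[OF assms(1)]
    by (intro eq_if_dvd_diff_degree_less) auto
qed (use assms in auto)

lemma red_rep:
  assumes "0 < d"
  shows "degree (red_rep c d n) < d" and "(monom 1 d - gpoly c d) dvd (monom 1 n - red_rep c d n)"
proof -
  obtain r where "degree r < d" and "(monom 1 d - gpoly c d) dvd (monom 1 n - r)"
    using ex_remainder_monic[OF lead_coeff_monom_minus_gpoly[OF assms], where f = "monom 1 n"] assms
    by (auto simp: degree_monom_minus_gpoly)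
  with red_rep_eqI[OF assms] show "degree (red_rep c d n) < d"
    and "(monom 1 d - gpoly c d) dvd (monom 1 n - red_rep c d n)"
    by simp_all
qed

lemma red_rep_less: "n < d \<Longrightarrow> red_rep c d n = monom 1 n"
  by (rule red_rep_eqI) (auto simp: degree_monom_eq)

lemma red_rep_recurrence:
  assumes "0 < d" and "d \<le> n"
  shows "red_rep c d n = (\<Sum>i<d. smult (c i) (red_rep c d (n - d + i)))"
proof (rule red_rep_eqI[OF assms(1)])
  let ?p = "monom 1 d - gpoly c d"
  show "degree (\<Sum>i<d. smult (c i) (red_rep c d (n - d + i))) < d"
    using assms red_rep(1)
    by (intro degree_sum_less) (auto intro: le_less_trans[OF degree_smult_le])
  have "monom 1 n - (\<Sum>i<d. smult (c i) (red_rep c d (n - d + i)))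
      = monom 1 (n - d) * ?p
        + (\<Sum>i<d. smult (c i) (monom 1 (n - d + i) - red_rep c d (n - d + i)))"
    using monom_minus_shifted_gpoly[OF assms(2), of c, symmetric]
    by (simp add: sum_subtractf smult_diff_right)
  moreover have "?p dvd (\<Sum>i<d. smult (c i) (monom 1 (n - d + i) - red_rep c d (n - d + i)))"
    using red_rep(2)[OF assms(1)] by (intro dvd_sum) (simp add: dvd_smult)
  ultimately show "?p dvd monom 1 n - (\<Sum>i<d. smult (c i) (red_rep c d (n - d + i)))"
    by simp
qed

theorem lemma3p1:
  fixes A c :: "nat \<Rightarrow> int" and n d :: nat
  assumes "n \<ge> 1" and "d \<ge> 1"
    and "\<And>k. k < d \<Longrightarrow> A k = 1"
    and "\<And>m. m \<ge> d \<Longrightarrow> A m = (\<Sum>i<d. c i * A (m - d + i))"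
  shows "A n = poly (red_rep c d n) 1"
proof (induction n rule: less_induct)
  case (less m)
  show ?case
  proof (cases "m < d")
    case True
    then show ?thesis
      using assms(3) by (simp add: red_rep_less poly_monom)
  next
    case False
    with assms(2) have "poly (red_rep c d m) 1 = (\<Sum>i<d. c i * poly (red_rep c d (m - d + i)) 1)"
      by (simp add: red_rep_recurrence poly_sum)
    also have "\<dots> = A m"
      using less.IH False assms(4)[of m] by simp
    finally show ?thesis ..
  qed
qed

end
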